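(* Let $N\ge 2$, $1\le r<N$, and consider a single reversible reaction with stoichiometric vector $\sigma=(\sigma_1,\dots,\sigma_N)^{\rm T}=(-\alpha_1,\dots,-\alpha_r,\beta_{r+1},\dots,\beta_N)^{\rm T}$, where $\alpha_i>0$ for $i\le r$ and $\beta_i>0$ for $i>r$. Let $U_1,\dots,U_N\in\mathbb{R}$, $k_1^->0$, $\Delta t>0$. Let $c^0\in\mathbb{R}^N$ with $c^0_i>0$ for all $i$, set $c(R)=c^0+\sigma R$ for $R\in\mathbb{R}$, and let $R^n=0$. Let $\widehat R^{n+1}\in\mathbb{R}$ be any number with $c_i(\widehat R^{n+1})>0$ for all $i$ (for instance the solution of the first-order predictor scheme described in the context), put $\widehat R^{n+1/2}=\tfrac12(R^n+\widehat R^{n+1})$ and $\hat\eta=\eta(c(\widehat R^{n+1/2}))$. Then there exists a unique $R^{n+1}\in\mathbb{R}$ such that $c_i(R^{n+1})>0$ for all $i$, $R^{n+1}-R^n+\hat\eta\,\Delta t>0$, and $$\ln\Big(\frac{R^{n+1}-R^n}{\hat\eta\,\Delta t}+1\Big)=-\mu_R^{n+1/2},\qquad \mu_R^{n+1/2}=\phi(R^{n+1},R^n)+\Delta t\sum_{i=1}^N\sigma_i\big(\mu_i(R^{n+1})-\mu_i(R^n)\big).$$ Moreover, $R^{n+1}$ is the unique minimizer over $\{R: c_i(R)>0\ \forall i,\ R-R^n+\hat\eta\Delta t>0\}$ of the strictly convex function $$J_n(R)=(R-R^n+\hat\eta\Delta t)\ln\Big(\frac{R-R^n}{\hat\eta\Delta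 t}+1\Big)-(R-R^n)+\int_{R^n}^R\phi(s,R^n)\,ds+\Delta t\,F(R)-\gamma^n R,$$ where $\gamma^n=\Delta t\sum_{i=1}^N\sigma_i\mu_i(R^n)$.
   Context: For $R$ with $c_i(R)>0$ for all $i$, define the (pointwise) free energy $F(R)=\sum_{i=1}^N\big[c_i(R)(\ln c_i(R)-1)+c_i(R)U_i\big]$, the chemical potentials $\mu_i(R)=\ln c_i(R)+U_i$ (so $F'(R)=\sum_i\sigma_i\mu_i(R)$), and the mobility $\eta(c)=k_1^-\prod_{i=r+1}^N c_i^{\beta_i}$ for $c$ with positive components. The discrete variational derivative is $\phi(p,q)=\frac{F(p)-F(q)}{p-q}$ if $p\neq q$ and $\phi(p,p)=F'(p)$. A first-order predictor $\widehat R^{n+1}$ may be obtained by solving $\ln\big(\frac{\widehat R^{n+1}-R^n}{\eta(c(R^n))\Delta t}+1\big)=-\sum_{i=1}^N\sigma_i\mu_i(\widehat R^{n+1})$ with $c(\widehat R^{n+1})$ componentwise positive. *)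

theory Defs
  imports "HOL-Analysis.Analysis"
begin

text \<open>Species are indexed by 1..N; vectors are functions nat => real.\<close>

definition sigma :: "nat \<Rightarrow> (nat \<Rightarrow> real) \<Rightarrow> (nat \<Rightarrow> real) \<Rightarrow> nat \<Rightarrow> real" where
  "sigma r \<alpha> \<beta> i = (if i \<le> r then - \<alpha> i else \<beta> i)"

definition conc :: "(nat \<Rightarrow> real) \<Rightarrow> (nat \<Rightarrow> real) \<Rightarrow> real \<Rightarrow> nat \<Rightarrow> real" where
  "conc c0 \<sigma> R i = c0 i + \<sigma> i * R"

definition freeE :: "nat \<Rightarrow> (nat \<Rightarrow> real) \<Rightarrow> (nat \<Rightarrow> real) \<Rightarrow> (nat \<Rightarrow> real) \<Rightarrow> real \<Rightarrow> real" where
  "freeE N c0 \<sigma> U R = (\<Sum>i=1..N. conc c0 \<sigma> R i * (ln (conc c0 \<sigma> R i) - 1) + conc c0 \<sigma> R i * U i)"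

definition chempot :: "(nat \<Rightarrow> real) \<Rightarrow> (nat \<Rightarrow> real) \<Rightarrow> (nat \<Rightarrow> real) \<Rightarrow> nat \<Rightarrow> real \<Rightarrow> real" where
  "chempot c0 \<sigma> U i R = ln (conc c0 \<sigma> R i) + U i"

definition mobility :: "real \<Rightarrow> nat \<Rightarrow> nat \<Rightarrow> (nat \<Rightarrow> real) \<Rightarrow> (nat \<Rightarrow> real) \<Rightarrow> real" where
  "mobility k r N \<beta> c = k * (\<Prod>i=r+1..N. c i powr \<beta> i)"

text \<open>discrete variational derivative; F'(p) = sum_i sigma_i mu_i(p)\<close>
definition dvd_phi :: "nat \<Rightarrow> (nat \<Rightarrow> real) \<Rightarrow> (nat \<Rightarrow> real) \<Rightarrow> (nat \<Rightarrow> real) \<Rightarrow> real \<Rightarrow> real \<Rightarrow> real" where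
  "dvd_phi N c0 \<sigma> U p q =
     (if p \<noteq> q then (freeE N c0 \<sigma> U p - freeE N c0 \<sigma> U q) / (p - q)
      else (\<Sum>i=1..N. \<sigma> i * chempot c0 \<sigma> U i p))"

text \<open>The functional J_n (with R^n, eta-hat, Delta t as parameters); the integral is oriented.\<close>
definition Jn :: "nat \<Rightarrow> (nat \<Rightarrow> real) \<Rightarrow> (nat \<Rightarrow> real) \<Rightarrow> (nat \<Rightarrow> real) \<Rightarrow> real \<Rightarrow> real \<Rightarrow> real \<Rightarrow> real \<Rightarrow> real" where
  "Jn N c0 \<sigma> U Rn eta dt R =
     (R - Rn + eta * dt) * ln ((R - Rn) / (eta * dt) + 1) - (R - Rn)
     + (LBINT s=Rn..R. dvd_phi N c0 \<sigma> U s Rn)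
     + dt * freeE N c0 \<sigma> U R
     - (dt * (\<Sum>i=1..N. \<sigma> i * chempot c0 \<sigma> U i Rn)) * R"

definition strictly_convex_on :: "real set \<Rightarrow> (real \<Rightarrow> real) \<Rightarrow> bool" where
  "strictly_convex_on D f \<longleftrightarrow> convex D \<and>
     (\<forall>x\<in>D. \<forall>y\<in>D. \<forall>t::real. x \<noteq> y \<and> 0 < t \<and> t < 1 \<longrightarrow>
        f ((1 - t) * x + t * y) < (1 - t) * f x + t * f y)"

end

theory Submission
  imports Defs
begin

(* The domain D is an open interval (lower, upper): at upper some reactant runs out, at
   lower some product runs out or the argument of the logarithm vanishes, whichever
   happens first. On D the functional J_n is differentiable and its derivative is exactly
   the residual of the scheme, ln(R/(eta dt)+1) + phi(R,0) + dt (F'(R) - F'(0)).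
   This residual is strictly increasing: the logarithm is, phi(., 0) is a difference
   quotient of the convex free energy F, and each sigma_i mu_i is monotone. Hence J_n is
   strictly convex, and every zero of the residual is the strict minimiser of J_n. Such a
   zero exists and is unique by the intermediate value theorem, since near each end of D
   one logarithm in the residual diverges to -infinity resp. +infinity while all other
   terms stay bounded on the corresponding side of 0. *)

lemma has_real_derivative_interval_integral:
  fixes f :: "real \<Rightarrow> real"
  assumes "a < c" "c < b" "continuous_on {a<..<b} f" "a < x" "x < b"
  shows "((\<lambda>u. LBINT y=c..u. f y) has_real_derivative f x) (at x)"
proof -
  define d where "d = (a + min c x) / 2"
  define e where "e = (max c x + b) / 2"
  have de: "a < d" "d < c" "d < x" "c < e" "x < e" "e < b"
    using assms by (auto simp: d_def e_def)
  have "continuous_on {d..e} f"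
    by (rule continuous_on_subset[OF assms(3)]) (use de in auto)
  then have "((\<lambda>u. LBINT y=c..u. f y) has_vector_derivative f x) (at x within {d..e})"
    by (intro interval_integral_FTC2) (use de in linarith)+
  then show ?thesis
    using de by (simp add: at_within_Icc_at has_real_derivative_iff_has_vector_derivative)
qed

lemma shifted_xlnx_has_real_derivative:
  "0 < e \<Longrightarrow> 0 < x / e + 1 \<Longrightarrow>
    ((\<lambda>x. (x + e) * ln (x / e + 1)) has_real_derivative ln (x / e + 1) + 1) (at x)"
  by (rule derivative_eq_intros refl | simp)+ (simp add: field_simps)

lemma affine_entropy_has_real_derivative:
  "0 < c + s * x \<Longrightarrow> ((\<lambda>x. (c + s * x) * (ln (c + s * x) - 1) + (c + s * x) * u)
    has_real_derivative s * (ln (c + s * x) + u)) (at x)"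
  by (rule derivative_eq_intros refl | simp)+ (simp add: algebra_simps)

lemma difference_quotient_mono:
  fixes F dF :: "real \<Rightarrow> real"
  assumes deriv: "\<And>x. a < x \<Longrightarrow> x < b \<Longrightarrow> (F has_real_derivative dF x) (at x)"
    and mono: "\<And>x y. a < x \<Longrightarrow> x \<le> y \<Longrightarrow> y < b \<Longrightarrow> dF x \<le> dF y"
    and c: "a < c" "c < b" and xy: "a < x" "x \<le> y" "y < b"
  shows "(if x \<noteq> c then (F x - F c) / (x - c) else dF c)
       \<le> (if y \<noteq> c then (F y - F c) / (y - c) else dF c)"
proof -
  have convex: "convex_on {a<..<b} F"
    by (rule convex_on_realI[where f'=dF]) (auto intro: deriv mono)
  have tangent: "dF c * (z - c) \<le> F z - F c" if "a < z" "z < b" for z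
    by (rule convex_on_imp_above_tangent[OF convex]) (use that c deriv in \<open>auto intro: has_field_derivative_at_within\<close>)
  have below: "(F z - F c) / (z - c) \<le> dF c" if "a < z" "z < c" for z
    using tangent[of z] that c by (simp add: divide_le_eq mult.commute)
  have above: "dF c \<le> (F z - F c) / (z - c)" if "c < z" "z < b" for z
    using tangent[of z] that c by (simp add: le_divide_eq mult.commute)
  consider "y < c" | "c < x" | "x \<le> c" "c \<le> y" by linarith
  then show ?thesis
  proof cases
    case 1
    then show ?thesis
      using convex_on_slope_le(2)[OF convex, of x c y] xy c by (cases "x = y") auto
  next
    case 2
    have swap: "(F z - F c) / (z - c) = (F c - F z) / (c - z)" for z
      by (metis minus_diff_eq minus_divide_divide)
    show ?thesis
    proof (cases "x = y")
      case False
      then show ?thesis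
        using convex_on_slope_le(1)[OF convex, of c y x] xy c 2 swap[of x] swap[of y] by auto
    qed simp
  next
    case 3
    then show ?thesis
      using below[of x] above[of y] xy by (cases "x = c"; cases "y = c") auto
  qed
qed

lemma continuous_on_difference_quotient:
  fixes F dF :: "real \<Rightarrow> real"
  assumes deriv: "\<And>x. a < x \<Longrightarrow> x < b \<Longrightarrow> (F has_real_derivative dF x) (at x)"
    and c: "a < c" "c < b"
  shows "continuous_on {a<..<b} (\<lambda>x. if x \<noteq> c then (F x - F c) / (x - c) else dF c)"
proof (intro continuous_at_imp_continuous_on ballI)
  fix x assume x: "x \<in> {a<..<b}"
  show "isCont (\<lambda>x. if x \<noteq> c then (F x - F c) / (x - c) else dF c) x"
  proof (cases "x = c")
    case True
    have "((\<lambda>y. (F y - F c) / (y - c)) \<longlongrightarrow> dF c) (at c)"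
      using deriv[of c] c by (simp add: has_field_derivative_iff)
    then have "((\<lambda>y. if y \<noteq> c then (F y - F c) / (y - c) else dF c) \<longlongrightarrow> dF c) (at c)"
      by (rule tendsto_cong[THEN iffD1, rotated]) (auto simp: eventually_at_filter)
    then show ?thesis using True by (simp add: isCont_def)
  next
    case False
    have "isCont F x" using deriv[of x] x DERIV_isCont by auto
    then have "isCont (\<lambda>y. (F y - F c) / (y - c)) x" using False by (auto intro!: continuous_intros)
    moreover have "eventually (\<lambda>y. y \<noteq> c) (nhds x)"
      using False by (intro t1_space_nhds)
    then have "isCont (\<lambda>x. if x \<noteq> c then (F x - F c) / (x - c) else dF c) x
        \<longleftrightarrow> isCont (\<lambda>y. (F y - F c) / (y - c)) x"
      by (intro isCont_cong) (simp add: eventually_mono)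
    ultimately show ?thesis by simp
  qed
qed

lemma strictly_convex_on_realI:
  fixes f g :: "real \<Rightarrow> real"
  assumes deriv: "\<And>x. a < x \<Longrightarrow> x < b \<Longrightarrow> (f has_real_derivative g x) (at x)"
    and mono: "\<And>x y. a < x \<Longrightarrow> x < y \<Longrightarrow> y < b \<Longrightarrow> g x < g y"
  shows "strictly_convex_on {a<..<b} f"
proof -
  have ordered: "f ((1 - t) * x + t * y) < (1 - t) * f x + t * f y"
    if xy: "a < x" "x < y" "y < b" and t: "0 < t" "t < 1" for x y t
  proof -
    define z where "z = (1 - t) * x + t * y"
    have zx: "z - x = t * (y - x)" and yz: "y - z = (1 - t) * (y - x)"
      by (simp_all add: z_def algebra_simps)
    then have z: "x < z" "z < y"
      using xy t by (metis diff_gt_0_iff_gt mult_pos_pos)+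
    obtain u where u: "x < u" "u < z" "f z - f x = (z - x) * g u"
      using MVT2[of x z f g] z xy deriv by (smt (verit))
    obtain v where v: "z < v" "v < y" "f y - f z = (y - z) * g v"
      using MVT2[of z y f g] z xy deriv by (smt (verit))
    have "g u < g v" using mono[of u v] u v xy by linarith
    then have "0 < t * (1 - t) * (y - x) * (g v - g u)" using xy t by simp
    also have "\<dots> = t * ((1 - t) * (y - x) * g v) - (1 - t) * (t * (y - x) * g u)"
      by (simp add: algebra_simps)
    also have "\<dots> = t * (f y - f z) - (1 - t) * (f z - f x)"
      using u(3) v(3) zx yz by simp
    finally show ?thesis unfolding z_def[symmetric] by (simp add: algebra_simps)
  qed
  show ?thesis
    unfolding strictly_convex_on_def
  proof (intro conjI ballI allI impI)
    fix x y t :: real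
    assume "x \<in> {a<..<b}" "y \<in> {a<..<b}" and h: "x \<noteq> y \<and> 0 < t \<and> t < 1"
    then consider "a < x" "x < y" "y < b" | "a < y" "y < x" "x < b" by fastforce
    then show "f ((1 - t) * x + t * y) < (1 - t) * f x + t * f y"
    proof cases
      case 2
      then show ?thesis using ordered[of y x "1 - t"] h by (simp add: algebra_simps)
    qed (use ordered h in blast)
  qed simp
qed

lemma deriv_zero_strict_mono_imp_strict_min:
  fixes f g :: "real \<Rightarrow> real"
  assumes deriv: "\<And>x. a < x \<Longrightarrow> x < b \<Longrightarrow> (f has_real_derivative g x) (at x)"
    and mono: "\<And>x y. a < x \<Longrightarrow> x < y \<Longrightarrow> y < b \<Longrightarrow> g x < g y"
    and R: "a < R" "R < b" "g R = 0" and S: "a < S" "S < b" "S \<noteq> R"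
  shows "f R < f S"
proof (cases "R < S")
  case True
  obtain u where u: "R < u" "u < S" "f S - f R = (S - R) * g u"
    using MVT2[of R S f g] True R S deriv by (smt (verit))
  have "g u > 0" using mono[of R u] u R S by auto
  then show ?thesis using u True by (smt (verit) mult_pos_pos)
next
  case False
  then have SR: "S < R" using S by auto
  obtain u where u: "S < u" "u < R" "f R - f S = (R - S) * g u"
    using MVT2[of S R f g] SR R S deriv by (smt (verit))
  have "g u < 0" using mono[of u R] u R S by auto
  then show ?thesis using u SR by (smt (verit) mult_pos_neg)
qed

lemma unique_zero_of_continuous_strict_mono:
  fixes g :: "real \<Rightarrow> real"
  assumes cont: "continuous_on {a<..<b} g"
    and mono: "\<And>x y. a < x \<Longrightarrow> x < y \<Longrightarrow> y < b \<Longrightarrow> g x < g y"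
    and p: "a < p" "p < b" "g p < 0" and q: "a < q" "q < b" "0 < g q"
  shows "\<exists>!R. R \<in> {a<..<b} \<and> g R = 0"
proof -
  have "p < q" using mono[of q p] p q by (cases p q rule: linorder_cases) auto
  moreover have "continuous_on {p..q} g"
    by (rule continuous_on_subset[OF cont]) (use p q in auto)
  ultimately obtain R where "p \<le> R" "R \<le> q" "g R = 0"
    using IVT'[of g p 0 q] p q by auto
  moreover have "R = S" if "R \<in> {a<..<b}" "S \<in> {a<..<b}" "g R = 0" "g S = 0" for R S
    using that mono[of R S] mono[of S R] by (cases R S rule: linorder_cases) auto
  ultimately show ?thesis using p q by (metis greaterThanLessThan_iff order_less_le_trans order_le_less_trans)
qed

lemma exists_ln_mult_less:
  fixes A B K :: real
  assumes "0 < A" "0 < B"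
  shows "\<exists>\<delta>. 0 < \<delta> \<and> \<delta> < B \<and> ln (A * \<delta>) < K"
proof -
  define \<delta> where "\<delta> = min (B / 2) (exp K / (2 * A))"
  have \<delta>: "0 < \<delta>" "\<delta> < B" using assms by (auto simp: \<delta>_def)
  have "A * \<delta> \<le> exp K / 2" using assms by (simp add: \<delta>_def min_def field_simps)
  then have "A * \<delta> < exp K" using exp_gt_zero[of K] by linarith
  then have "ln (A * \<delta>) < K" using \<delta> assms by (metis ln_exp ln_less_cancel_iff exp_gt_zero mult_pos_pos)
  with \<delta> show ?thesis by blast
qed

lemma freeE_has_real_derivative:
  assumes "\<forall>i\<in>{1..N}. conc c0 \<sigma> R i > 0"
  shows "(freeE N c0 \<sigma> U has_real_derivative (\<Sum>i=1..N. \<sigma> i * chempot c0 \<sigma> U i R)) (at R)"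
  unfolding freeE_def conc_def chempot_def
  by (rule DERIV_sum affine_entropy_has_real_derivative)+ (use assms in \<open>simp add: conc_def\<close>)

lemma sigma_chempot_mono:
  assumes "0 < conc c0 \<sigma> x i" "0 < conc c0 \<sigma> y i" "x \<le> y"
  shows "\<sigma> i * chempot c0 \<sigma> U i x \<le> \<sigma> i * chempot c0 \<sigma> U i y"
proof (cases "\<sigma> i \<ge> 0")
  case True
  then have "conc c0 \<sigma> x i \<le> conc c0 \<sigma> y i" using assms by (simp add: conc_def mult_left_mono)
  then show ?thesis using True assms by (simp add: chempot_def mult_left_mono)
next
  case False
  then have "conc c0 \<sigma> y i \<le> conc c0 \<sigma> x i" using assms by (simp add: conc_def mult_left_mono_neg)
  then show ?thesis using False assms by (simp add: chempot_def mult_left_mono_neg)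
qed

lemma conc_midpoint_pos:
  assumes "0 < conc c0 \<sigma> x i" "0 < conc c0 \<sigma> y i"
  shows "0 < conc c0 \<sigma> ((x + y) / 2) i"
proof -
  have "conc c0 \<sigma> ((x + y) / 2) i = (conc c0 \<sigma> x i + conc c0 \<sigma> y i) / 2"
    by (simp add: conc_def field_simps)
  then show ?thesis using assms by simp
qed

lemma mobility_pos:
  assumes "k > 0" "\<forall>i\<in>{r+1..N}. c i > 0"
  shows "mobility k r N \<beta> c > 0"
  using assms unfolding mobility_def by (auto intro!: mult_pos_pos prod_pos)

locale single_reaction_step =
  fixes N r :: nat and \<alpha> \<beta> U c0 :: "nat \<Rightarrow> real" and dt \<eta> :: real
  assumes r_pos: "1 \<le> r" and r_less: "r < N"
    and alpha_pos: "\<forall>i\<in>{1..r}. 0 < \<alpha> i" and beta_pos: "\<forall>i\<in>{r+1..N}. 0 < \<beta> i"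
    and c0_pos: "\<forall>i\<in>{1..N}. 0 < c0 i" and dt_pos: "0 < dt" and eta_pos: "0 < \<eta>"
begin

abbreviation \<sigma> :: "nat \<Rightarrow> real" where "\<sigma> \<equiv> sigma r \<alpha> \<beta>"

abbreviation F :: "real \<Rightarrow> real" where "F \<equiv> freeE N c0 \<sigma> U"

abbreviation dF :: "real \<Rightarrow> real" where "dF R \<equiv> \<Sum>i=1..N. \<sigma> i * chempot c0 \<sigma> U i R"

abbreviation \<phi> :: "real \<Rightarrow> real" where "\<phi> R \<equiv> dvd_phi N c0 \<sigma> U R 0"

definition upper :: real where
  "upper = Min ((\<lambda>i. c0 i / \<alpha> i) ` {1..r})"

definition lower :: real where
  "lower = - Min (insert (\<eta> * dt) ((\<lambda>i. c0 i / \<beta> i) ` {r+1..N}))"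

definition residual :: "real \<Rightarrow> real" where
  "residual R = ln (R / (\<eta> * dt) + 1) + \<phi> R + dt * (dF R - dF 0)"

lemma conc_pos_iff:
  assumes "i \<in> {1..N}"
  shows "0 < conc c0 \<sigma> R i \<longleftrightarrow> (if i \<le> r then R < c0 i / \<alpha> i else - (c0 i / \<beta> i) < R)"
proof (cases "i \<le> r")
  case True
  then have "0 < \<alpha> i" using assms alpha_pos by auto
  then show ?thesis using True by (simp add: conc_def sigma_def field_simps)
next
  case False
  then have "0 < \<beta> i" using assms beta_pos by auto
  then show ?thesis using False by (simp add: conc_def sigma_def field_simps) linarith
qed

lemma domain_eq:
  "{R. (\<forall>i\<in>{1..N}. 0 < conc c0 \<sigma> R i) \<and> 0 < R + \<eta> * dt} = {lower<..<upper}"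
proof -
  have "R < upper \<longleftrightarrow> (\<forall>i\<in>{1..r}. R < c0 i / \<alpha> i)" for R
    using r_pos by (simp add: upper_def Min_gr_iff)
  moreover have "lower < R \<longleftrightarrow> 0 < R + \<eta> * dt \<and> (\<forall>i\<in>{r+1..N}. - (c0 i / \<beta> i) < R)" for R
    by (auto simp: lower_def minus_less_iff Min_gr_iff)
  moreover have "{1..N} = {1..r} \<union> {r+1..N}" using r_less by auto
  ultimately show ?thesis using conc_pos_iff by auto
qed

lemma lower_neg: "lower < 0" and upper_pos: "0 < upper"
proof -
  have "0 \<in> {lower<..<upper}"
    unfolding domain_eq[symmetric] using c0_pos eta_pos dt_pos by (simp add: conc_def)
  then show "lower < 0" "0 < upper" by auto
qed

lemma conc_pos:
  assumes "lower < R" "R < upper" "i \<in> {1..N}"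
  shows "0 < conc c0 \<sigma> R i"
proof -
  have "R \<in> {R. (\<forall>i\<in>{1..N}. 0 < conc c0 \<sigma> R i) \<and> 0 < R + \<eta> * dt}"
    unfolding domain_eq using assms by simp
  then show ?thesis using assms(3) by simp
qed

lemma ln_arg_pos:
  assumes "lower < R"
  shows "0 < R / (\<eta> * dt) + 1"
proof -
  have "- (\<eta> * dt) \<le> lower" by (simp add: lower_def)
  then show ?thesis using assms eta_pos dt_pos by (simp add: field_simps)
qed

lemma F_has_real_derivative: "lower < R \<Longrightarrow> R < upper \<Longrightarrow> (F has_real_derivative dF R) (at R)"
  by (rule freeE_has_real_derivative) (use conc_pos in auto)

lemma sigma_chempot_le:
  "lower < x \<Longrightarrow> x \<le> y \<Longrightarrow> y < upper \<Longrightarrow> i \<in> {1..N} \<Longrightarrow>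
    \<sigma> i * chempot c0 \<sigma> U i x \<le> \<sigma> i * chempot c0 \<sigma> U i y"
  by (rule sigma_chempot_mono) (use conc_pos in auto)

lemma dF_mono: "lower < x \<Longrightarrow> x \<le> y \<Longrightarrow> y < upper \<Longrightarrow> dF x \<le> dF y"
  by (intro sum_mono sigma_chempot_le)

lemma sigma_chempot_diff_le_dF_diff:
  assumes "lower < x" "x \<le> y" "y < upper" "k \<in> {1..N}"
  shows "\<sigma> k * chempot c0 \<sigma> U k y - \<sigma> k * chempot c0 \<sigma> U k x \<le> dF y - dF x"
proof -
  have "\<sigma> k * chempot c0 \<sigma> U k y - \<sigma> k * chempot c0 \<sigma> U k x
      \<le> (\<Sum>i=1..N. \<sigma> i * chempot c0 \<sigma> U i y - \<sigma> i * chempot c0 \<sigma> U i x)"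
    by (rule member_le_sum) (use assms sigma_chempot_le in auto)
  then show ?thesis by (simp add: sum_subtractf)
qed

lemma phi_eq: "\<phi> R = (if R \<noteq> 0 then (F R - F 0) / (R - 0) else dF 0)"
  by (simp add: dvd_phi_def)

lemma phi_mono:
  assumes "lower < x" "x \<le> y" "y < upper"
  shows "\<phi> x \<le> \<phi> y"
proof -
  have "(if x \<noteq> 0 then (F x - F 0) / (x - 0) else dF 0) \<le> (if y \<noteq> 0 then (F y - F 0) / (y - 0) else dF 0)"
    by (rule difference_quotient_mono[where a=lower and b=upper])
      (use F_has_real_derivative dF_mono lower_neg upper_pos assms in auto)
  then show ?thesis by (simp only: phi_eq)
qed

lemma phi_continuous: "continuous_on {lower<..<upper} \<phi>"
proof -
  have "continuous_on {lower<..<upper} (\<lambda>R. if R \<noteq> 0 then (F R - F 0) / (R - 0) else dF 0)"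
    by (rule continuous_on_difference_quotient) (use F_has_real_derivative lower_neg upper_pos in auto)
  then show ?thesis by (simp only: phi_eq)
qed

lemma dF_continuous: "continuous_on {lower<..<upper} dF"
proof (intro continuous_on_sum continuous_on_mult continuous_on_const)
  fix i assume "i \<in> {1..N}"
  then have "\<forall>R\<in>{lower<..<upper}. c0 i + \<sigma> i * R \<noteq> 0"
    using conc_pos by (fastforce simp: conc_def)
  then show "continuous_on {lower<..<upper} (chempot c0 \<sigma> U i)"
    unfolding chempot_def conc_def by (intro continuous_intros) auto
qed

lemma residual_strict_mono:
  assumes "lower < x" "x < y" "y < upper"
  shows "residual x < residual y"
proof -
  have "x / (\<eta> * dt) + 1 < y / (\<eta> * dt) + 1"
    using assms eta_pos dt_pos by (simp add: divide_strict_right_mono)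
  then have "ln (x / (\<eta> * dt) + 1) < ln (y / (\<eta> * dt) + 1)"
    using ln_arg_pos assms by simp
  moreover have "\<phi> x \<le> \<phi> y" using phi_mono assms by simp
  moreover have "dt * (dF x - dF 0) \<le> dt * (dF y - dF 0)"
    using dF_mono[of x y] assms dt_pos by (simp add: mult_left_mono)
  ultimately show ?thesis unfolding residual_def by linarith
qed

lemma residual_continuous: "continuous_on {lower<..<upper} residual"
proof -
  have "continuous_on {lower<..<upper} (\<lambda>R. ln (R / (\<eta> * dt) + 1))"
    by (intro continuous_intros) (use ln_arg_pos eta_pos dt_pos in fastforce)+
  then show ?thesis
    unfolding residual_def
    by (intro continuous_on_add continuous_on_mult continuous_on_diff continuous_on_const
        phi_continuous dF_continuous)
qed

lemma Jn_has_real_derivative: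
  assumes "lower < R" "R < upper"
  shows "(Jn N c0 \<sigma> U 0 \<eta> dt has_real_derivative residual R) (at R)"
proof -
  have "Jn N c0 \<sigma> U 0 \<eta> dt = (\<lambda>R. (R + \<eta> * dt) * ln (R / (\<eta> * dt) + 1) - R
      + (LBINT s=ereal 0..ereal R. \<phi> s) + dt * F R - dt * dF 0 * R)"
    by (simp add: Jn_def fun_eq_iff)
  moreover have "((\<lambda>R. (R + \<eta> * dt) * ln (R / (\<eta> * dt) + 1) - R
      + (LBINT s=ereal 0..ereal R. \<phi> s) + dt * F R - dt * dF 0 * R) has_real_derivative
      (ln (R / (\<eta> * dt) + 1) + 1) - 1 + \<phi> R + dt * dF R - dt * dF 0 * 1) (at R)"
    using eta_pos dt_pos ln_arg_pos assms lower_neg upper_pos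
    by (intro DERIV_diff DERIV_add DERIV_cmult DERIV_ident shifted_xlnx_has_real_derivative
        has_real_derivative_interval_integral[where a=lower and b=upper] phi_continuous
        F_has_real_derivative) auto
  moreover have "(ln (R / (\<eta> * dt) + 1) + 1) - 1 + \<phi> R + dt * dF R - dt * dF 0 * 1 = residual R"
    by (simp add: residual_def algebra_simps)
  ultimately show ?thesis by simp
qed

lemma residual_ge_sigma_chempot:
  assumes "0 \<le> q" "q < upper" "j \<in> {1..N}"
  shows "\<phi> 0 + dt * (\<sigma> j * chempot c0 \<sigma> U j q - \<sigma> j * chempot c0 \<sigma> U j 0) \<le> residual q"
proof -
  have "0 \<le> ln (q / (\<eta> * dt) + 1)" using assms eta_pos dt_pos by simp
  moreover have "\<phi> 0 \<le> \<phi> q" using phi_mono lower_neg assms by simp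
  moreover have "\<sigma> j * chempot c0 \<sigma> U j q - \<sigma> j * chempot c0 \<sigma> U j 0 \<le> dF q - dF 0"
    using sigma_chempot_diff_le_dF_diff lower_neg assms by simp
  then have "dt * (\<sigma> j * chempot c0 \<sigma> U j q - \<sigma> j * chempot c0 \<sigma> U j 0) \<le> dt * (dF q - dF 0)"
    using dt_pos by (simp add: mult_left_mono)
  ultimately show ?thesis unfolding residual_def by linarith
qed

lemma residual_le_ln:
  assumes "lower < p" "p \<le> 0"
  shows "residual p \<le> ln (p / (\<eta> * dt) + 1) + \<phi> 0"
proof -
  have "\<phi> p \<le> \<phi> 0" using phi_mono upper_pos assms by simp
  moreover have "dt * (dF p - dF 0) \<le> 0"
    using dF_mono[of p 0] upper_pos assms dt_pos by (simp add: mult_nonneg_nonpos)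
  ultimately show ?thesis unfolding residual_def by linarith
qed

lemma residual_le_sigma_chempot:
  assumes "lower < p" "p \<le> 0" "k \<in> {1..N}"
  shows "residual p \<le> \<phi> 0 + dt * (\<sigma> k * chempot c0 \<sigma> U k p - \<sigma> k * chempot c0 \<sigma> U k 0)"
proof -
  have "ln (p / (\<eta> * dt) + 1) \<le> 0"
    using assms ln_arg_pos eta_pos dt_pos by (simp add: divide_nonpos_pos)
  moreover have "\<phi> p \<le> \<phi> 0" using phi_mono upper_pos assms by simp
  moreover have "dt * (dF p - dF 0) \<le> dt * (\<sigma> k * chempot c0 \<sigma> U k p - \<sigma> k * chempot c0 \<sigma> U k 0)"
    using sigma_chempot_diff_le_dF_diff[of p 0 k] upper_pos assms dt_pos by (simp add: mult_left_mono)
  ultimately show ?thesis unfolding residual_def by linarith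
qed

lemma residual_pos_near_upper: "\<exists>q. 0 < q \<and> q < upper \<and> 0 < residual q"
proof -
  have "finite ((\<lambda>i. c0 i / \<alpha> i) ` {1..r})" "(\<lambda>i. c0 i / \<alpha> i) ` {1..r} \<noteq> {}"
    using r_pos by auto
  then obtain j where j: "j \<in> {1..r}" "upper = c0 j / \<alpha> j"
    unfolding upper_def using Min_in by blast
  have jN: "j \<in> {1..N}" and \<alpha>j: "0 < \<alpha> j" and c0j: "0 < c0 j"
    using j r_less alpha_pos c0_pos by auto
  obtain \<delta> where \<delta>: "0 < \<delta>" "\<delta> < upper" "ln (\<alpha> j * \<delta>) < ln (c0 j) + \<phi> 0 / (dt * \<alpha> j)"
    using exists_ln_mult_less[OF \<alpha>j upper_pos] by blast
  define q where "q = upper - \<delta>"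
  have q: "0 < q" "q < upper" using \<delta> by (auto simp: q_def)
  have "c0 j + \<sigma> j * q = \<alpha> j * \<delta>"
    using j \<alpha>j by (simp add: q_def sigma_def algebra_simps)
  then have "dt * (\<sigma> j * chempot c0 \<sigma> U j q - \<sigma> j * chempot c0 \<sigma> U j 0)
      = dt * \<alpha> j * ln (c0 j) - dt * \<alpha> j * ln (\<alpha> j * \<delta>)"
    using j by (simp add: chempot_def conc_def sigma_def algebra_simps)
  moreover have "dt * \<alpha> j * ln (\<alpha> j * \<delta>) < dt * \<alpha> j * (ln (c0 j) + \<phi> 0 / (dt * \<alpha> j))"
    using \<delta>(3) dt_pos \<alpha>j by simp
  moreover have "dt * \<alpha> j * (ln (c0 j) + \<phi> 0 / (dt * \<alpha> j)) = dt * \<alpha> j * ln (c0 j) + \<phi> 0"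
    using dt_pos \<alpha>j by (simp add: distrib_left)
  ultimately have "0 < \<phi> 0 + dt * (\<sigma> j * chempot c0 \<sigma> U j q - \<sigma> j * chempot c0 \<sigma> U j 0)"
    by linarith
  then show ?thesis using residual_ge_sigma_chempot[of q j] q jN by force
qed

lemma residual_neg_near_lower: "\<exists>p. lower < p \<and> p < 0 \<and> residual p < 0"
proof -
  have "- lower \<in> insert (\<eta> * dt) ((\<lambda>i. c0 i / \<beta> i) ` {r+1..N})"
    unfolding lower_def minus_minus by (rule Min_in) auto
  then consider "- lower = \<eta> * dt" | k where "k \<in> {r+1..N}" "- lower = c0 k / \<beta> k" by auto
  then show ?thesis
  proof cases
    case 1
    obtain \<delta> where \<delta>: "0 < \<delta>" "\<delta> < - lower" "ln (1 / (\<eta> * dt) * \<delta>) < - \<phi> 0"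
      using exists_ln_mult_less[of "1 / (\<eta> * dt)" "- lower"] eta_pos dt_pos lower_neg by auto
    define p where "p = lower + \<delta>"
    have p: "lower < p" "p < 0" using \<delta> by (auto simp: p_def)
    have "p / (\<eta> * dt) + 1 = 1 / (\<eta> * dt) * \<delta>"
      using 1 eta_pos dt_pos by (simp add: p_def field_simps)
    then have "residual p < 0" using residual_le_ln[of p] p \<delta> by simp
    then show ?thesis using p by blast
  next
    case 2
    have kN: "k \<in> {1..N}" and \<beta>k: "0 < \<beta> k" using 2 beta_pos by auto
    obtain \<delta> where \<delta>: "0 < \<delta>" "\<delta> < - lower" "ln (\<beta> k * \<delta>) < ln (c0 k) - \<phi> 0 / (dt * \<beta> k)"
      using exists_ln_mult_less[OF \<beta>k, of "- lower"] lower_neg by auto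
    define p where "p = lower + \<delta>"
    have p: "lower < p" "p < 0" using \<delta> by (auto simp: p_def)
    have "\<beta> k * lower = - c0 k" using 2 \<beta>k by (simp add: field_simps)
    then have "c0 k + \<sigma> k * p = \<beta> k * \<delta>"
      using 2 by (simp add: p_def sigma_def algebra_simps)
    then have "dt * (\<sigma> k * chempot c0 \<sigma> U k p - \<sigma> k * chempot c0 \<sigma> U k 0)
        = dt * \<beta> k * ln (\<beta> k * \<delta>) - dt * \<beta> k * ln (c0 k)"
      using 2 by (simp add: chempot_def conc_def sigma_def algebra_simps)
    moreover have "dt * \<beta> k * ln (\<beta> k * \<delta>) < dt * \<beta> k * (ln (c0 k) - \<phi> 0 / (dt * \<beta> k))"
      using \<delta>(3) dt_pos \<beta>k by simp
    moreover have "dt * \<beta> k * (ln (c0 k) - \<phi> 0 / (dt * \<beta> k)) = dt * \<beta> k * ln (c0 k) - \<phi> 0"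
      using dt_pos \<beta>k by (simp add: right_diff_distrib)
    ultimately have "\<phi> 0 + dt * (\<sigma> k * chempot c0 \<sigma> U k p - \<sigma> k * chempot c0 \<sigma> U k 0) < 0"
      by linarith
    then show ?thesis using residual_le_sigma_chempot[of p k] p kN by force
  qed
qed

lemma residual_unique_zero: "\<exists>!R. R \<in> {lower<..<upper} \<and> residual R = 0"
proof -
  obtain p where "lower < p" "p < 0" "residual p < 0" using residual_neg_near_lower by blast
  moreover obtain q where "0 < q" "q < upper" "0 < residual q" using residual_pos_near_upper by blast
  ultimately show ?thesis
    using residual_continuous residual_strict_mono
    by (intro unique_zero_of_continuous_strict_mono[of lower upper residual p q]) auto
qed

lemma Jn_strict_minimum:
  assumes "R \<in> {lower<..<upper}" "residual R = 0" "S \<in> {lower<..<upper}" "S \<noteq> R"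
  shows "Jn N c0 \<sigma> U 0 \<eta> dt R < Jn N c0 \<sigma> U 0 \<eta> dt S"
  using deriv_zero_strict_mono_imp_strict_min[OF Jn_has_real_derivative residual_strict_mono] assms
  by simp

lemma Jn_strictly_convex: "strictly_convex_on {lower<..<upper} (Jn N c0 \<sigma> U 0 \<eta> dt)"
  by (rule strictly_convex_on_realI[OF Jn_has_real_derivative residual_strict_mono])

end

theorem theorem3p1:
  fixes N r :: nat and \<alpha> \<beta> U c0 :: "nat \<Rightarrow> real"
    and k1m dt Rn Rhat :: real
  assumes N2: "N \<ge> 2" and r1: "1 \<le> r" and rN: "r < N"
    and alpha_pos: "\<forall>i\<in>{1..r}. \<alpha> i > 0"
    and beta_pos: "\<forall>i\<in>{r+1..N}. \<beta> i > 0"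
    and k_pos: "k1m > 0" and dt_pos: "dt > 0"
    and c0_pos: "\<forall>i\<in>{1..N}. c0 i > 0"
    and Rn0: "Rn = 0"
    and Rhat_pos: "\<forall>i\<in>{1..N}. conc c0 (sigma r \<alpha> \<beta>) Rhat i > 0"
  shows "let \<sigma> = sigma r \<alpha> \<beta>;
             eta = mobility k1m r N \<beta> (conc c0 \<sigma> ((Rn + Rhat) / 2));
             D = {R. (\<forall>i\<in>{1..N}. conc c0 \<sigma> R i > 0) \<and> R - Rn + eta * dt > 0};
             scheme = (\<lambda>R. ln ((R - Rn) / (eta * dt) + 1) =
                 - (dvd_phi N c0 \<sigma> U R Rn
                    + dt * (\<Sum>i=1..N. \<sigma> i * (chempot c0 \<sigma> U i R - chempot c0 \<sigma> U i Rn))))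
         in (\<exists>!R. R \<in> D \<and> scheme R)
            \<and> (\<forall>R. R \<in> D \<and> scheme R \<longrightarrow>
                  (\<forall>S\<in>D. S \<noteq> R \<longrightarrow> Jn N c0 \<sigma> U Rn eta dt R < Jn N c0 \<sigma> U Rn eta dt S))
            \<and> strictly_convex_on D (Jn N c0 \<sigma> U Rn eta dt)"
proof -
  define \<eta> where "\<eta> = mobility k1m r N \<beta> (conc c0 (sigma r \<alpha> \<beta>) ((0 + Rhat) / 2))"
  have "0 < conc c0 (sigma r \<alpha> \<beta>) ((0 + Rhat) / 2) i" if "i \<in> {r+1..N}" for i
  proof (rule conc_midpoint_pos)
    show "0 < conc c0 (sigma r \<alpha> \<beta>) 0 i" using that c0_pos by (simp add: conc_def)
    show "0 < conc c0 (sigma r \<alpha> \<beta>) Rhat i" using that r1 Rhat_pos by simp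
  qed
  then have "0 < \<eta>" unfolding \<eta>_def using k_pos mobility_pos by blast
  then interpret single_reaction_step N r \<alpha> \<beta> U c0 dt \<eta>
    using r1 rN alpha_pos beta_pos c0_pos dt_pos by unfold_locales
  have domain: "{R. (\<forall>i\<in>{1..N}. 0 < conc c0 \<sigma> R i) \<and> 0 < R - 0 + \<eta> * dt} = {lower<..<upper}"
    using domain_eq by simp
  have scheme: "ln ((R - 0) / (\<eta> * dt) + 1) = - (dvd_phi N c0 \<sigma> U R 0
      + dt * (\<Sum>i=1..N. \<sigma> i * (chempot c0 \<sigma> U i R - chempot c0 \<sigma> U i 0)))
      \<longleftrightarrow> residual R = 0" for R
  proof -
    have "(\<Sum>i=1..N. \<sigma> i * (chempot c0 \<sigma> U i R - chempot c0 \<sigma> U i 0)) = dF R - dF 0"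
      by (simp add: right_diff_distrib sum_subtractf)
    then show ?thesis unfolding residual_def by auto
  qed
  show ?thesis
    unfolding Let_def Rn0 \<eta>_def[symmetric] domain scheme
    using residual_unique_zero Jn_strict_minimum Jn_strictly_convex by blast
qed

end
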